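(* If there exists a $\mathcal{D}$-snake for a domino tiling system $\mathcal{D}$, then $\mathcal{D}$ is solvable.
   Context: A domino tiling system is $\mathcal{D}=(\mathrm{Col},\mathrm{T},\mathrm{white})$ with $\mathrm{Col}$ a finite set of colours, $\mathrm{T}\subseteq\mathrm{Col}^4$ a set of tiles $(c_l,c_d,c_r,c_u)$ and $\mathrm{white}\in\mathrm{Col}$; throughout, $\mathrm{T}$ contains no tile with more than two white sides. A tile is left-/down-/right-/up-border if $c_l$/$c_d$/$c_r$/$c_u$ equals white. Tiles $t=(c_l,c_d,c_r,c_u)$, $t'=(c'_l,c'_d,c'_r,c'_u)$ are H-compatible if $c_r=c'_l$ and V-compatible if $c_u=c'_d$. $\mathcal{D}$ covers $\mathbb{Z}_n\times\mathbb{Z}_m$ ($n,m$ positive) if there is $\xi:\mathbb{Z}_n\times\mathbb{Z}_m\to\mathrm{T}$ such that for all $(x,y)$ with $\xi(x,y)=(c_l,c_d,c_r,c_u)$: $x=0$ iff $c_l$ is white, $x=n-1$ iff $c_r$ is white, $y=0$ iff $c_d$ is white, $y=m-1$ iff $c_u$ is white; $\xi(x,y),\xi(x+1,y)$ are H-compatible whenever $x+1<n$; $\xi(x,y),\xi(x,y+1)$ are V-compatible whenever $y+1<m$. $\mathcal{D}$ is solvable if it covers some $\mathbb{Z}_n\times\mathbb{Z}_m$. Use a role name $r$, individual names $\mathsf{ld},\mathsf{rd},\mathsf{lu},\mathsf{ru}$ (the named ones) and concept names $C_t$ ($t\in\mathrm{T}$); an element carries $t$ if it lies in $C_t^{\mathcal{I}}$.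 An interpretation $\mathcal{I}$ is a $\mathcal{D}$-snake if: (SPath) there is an $r^+$-path starting at $\mathsf{ld}^{\mathcal{I}}$, later passing $\mathsf{rd}^{\mathcal{I}}$, later $\mathsf{lu}^{\mathcal{I}}$ and ending at $\mathsf{ru}^{\mathcal{I}}$ (at positions $1<i<j<$ last); (SNoLoop) no named element $r^+$-reaches itself; (SUniqTil) every element $r^*$-reachable from $\mathsf{ld}^{\mathcal{I}}$ carries exactly one tile; (SSpecTil) the named elements are exactly the elements $r^*$-reachable from $\mathsf{ld}^{\mathcal{I}}$ carrying a tile with two white sides, and $\mathsf{ld}^{\mathcal{I}}$ carries a left- and down-border tile, $\mathsf{rd}^{\mathcal{I}}$ a right- and down-border tile, $\mathsf{lu}^{\mathcal{I}}$ a left- and up-border tile, $\mathsf{ru}^{\mathcal{I}}$ a right- and up-border tile; (SHori) for every element $d\neq\mathsf{ru}^{\mathcal{I}}$ that is $r^*$-reachable from $\mathsf{ld}^{\mathcal{I}}$ and carries $t=(c_l,c_d,c_r,c_u)$ there is a tile $t'=(c'_l,c'_d,c'_r,c'_u)$ carried by all $r$-successors of $d$ such that (i) $t,t'$ are H-compatible, (ii) if $c_d$ is white then ($c_r$ is not white iff $c'_d$ is white), (iii) if $c_u$ is white then $c'_u$ is white; (SLen) there is a unique positive integer $N$ such that all $r^+$-paths from $\mathsf{ld}^{\mathcal{I}}$ to $\mathsf{rd}^{\mathcal{I}}$ have length $N-1$, and $\mathsf{rd}^{\mathcal{I}}$ is the only element $r^{N-1}$-reachable from $\mathsf{ld}^{\mathcal{I}}$;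 (SVerti) for every element $d$ $r^*$-reachable from $\mathsf{ld}^{\mathcal{I}}$ carrying a tile $t$ that is not up-border, there is a tile $t'$ carried by all elements $r^N$-reachable from $d$ (with $N$ from (SLen)) such that $t,t'$ are V-compatible and $t$ is left-border (resp. right-border) iff $t'$ is. Path length is the number of edges. *)

theory Defs
  imports Main
begin

type_synonym 'c tile = "'c \<times> 'c \<times> 'c \<times> 'c"

definition cl :: "'c tile \<Rightarrow> 'c" where "cl t = (case t of (a,b,c,d) \<Rightarrow> a)"
definition cd :: "'c tile \<Rightarrow> 'c" where "cd t = (case t of (a,b,c,d) \<Rightarrow> b)"
definition cr :: "'c tile \<Rightarrow> 'c" where "cr t = (case t of (a,b,c,d) \<Rightarrow> c)"
definition cu :: "'c tile \<Rightarrow> 'c" where "cu t = (case t of (a,b,c,d) \<Rightarrow> d)"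

definition white_sides :: "'c \<Rightarrow> 'c tile \<Rightarrow> nat" where
  "white_sides w t = length (filter (\<lambda>c. c = w) [cl t, cd t, cr t, cu t])"

definition domino_system :: "'c set \<Rightarrow> 'c tile set \<Rightarrow> 'c \<Rightarrow> bool" where
  "domino_system Col T w \<longleftrightarrow> finite Col \<and> w \<in> Col \<and>
     (\<forall>t\<in>T. cl t \<in> Col \<and> cd t \<in> Col \<and> cr t \<in> Col \<and> cu t \<in> Col) \<and>
     (\<forall>t\<in>T. white_sides w t \<le> 2)"

definition H_compat :: "'c tile \<Rightarrow> 'c tile \<Rightarrow> bool" where
  "H_compat t t' \<longleftrightarrow> cr t = cl t'"

definition V_compat :: "'c tile \<Rightarrow> 'c tile \<Rightarrow> bool" where
  "V_compat t t' \<longleftrightarrow> cu t = cd t'"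

definition covers :: "'c tile set \<Rightarrow> 'c \<Rightarrow> nat \<Rightarrow> nat \<Rightarrow> bool" where
  "covers T w n m \<longleftrightarrow> (\<exists>\<xi> :: nat \<times> nat \<Rightarrow> 'c tile.
     \<forall>x<n. \<forall>y<m. \<xi> (x,y) \<in> T \<and>
       (x = 0 \<longleftrightarrow> cl (\<xi> (x,y)) = w) \<and>
       (x = n - 1 \<longleftrightarrow> cr (\<xi> (x,y)) = w) \<and>
       (y = 0 \<longleftrightarrow> cd (\<xi> (x,y)) = w) \<and>
       (y = m - 1 \<longleftrightarrow> cu (\<xi> (x,y)) = w) \<and>
       (x + 1 < n \<longrightarrow> H_compat (\<xi> (x,y)) (\<xi> (x+1,y))) \<and>
       (y + 1 < m \<longrightarrow> V_compat (\<xi> (x,y)) (\<xi> (x,y+1))))"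

definition solvable :: "'c tile set \<Rightarrow> 'c \<Rightarrow> bool" where
  "solvable T w \<longleftrightarrow> (\<exists>n m. 0 < n \<and> 0 < m \<and> covers T w n m)"

text \<open>Interpretations: the domain is the type 'd; r is the role, ld rd lu ru the named individuals,
  C t the extension of the concept name C_t (only for t \<in> T).\<close>
definition carries :: "'c tile set \<Rightarrow> ('c tile \<Rightarrow> 'd set) \<Rightarrow> 'd \<Rightarrow> 'c tile \<Rightarrow> bool" where
  "carries T C d t \<longleftrightarrow> t \<in> T \<and> d \<in> C t"

definition snake :: "'c tile set \<Rightarrow> 'c \<Rightarrow> ('d \<times> 'd) set \<Rightarrow> 'd \<Rightarrow> 'd \<Rightarrow> 'd \<Rightarrow> 'd
                      \<Rightarrow> ('c tile \<Rightarrow> 'd set) \<Rightarrow> bool" where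
  "snake T w r ld rd lu ru C \<longleftrightarrow>
    \<comment> \<open>SPath\<close>
    (\<exists>p i j. 0 < i \<and> i < j \<and> j < length p - 1 \<and>
        (\<forall>k. k + 1 < length p \<longrightarrow> (p ! k, p ! (k+1)) \<in> r) \<and>
        p ! 0 = ld \<and> p ! i = rd \<and> p ! j = lu \<and> p ! (length p - 1) = ru) \<and>
    \<comment> \<open>SNoLoop\<close>
    (\<forall>a\<in>{ld, rd, lu, ru}. (a, a) \<notin> r\<^sup>+) \<and>
    \<comment> \<open>SUniqTil\<close>
    (\<forall>d. (ld, d) \<in> r\<^sup>* \<longrightarrow> (\<exists>!t. carries T C d t)) \<and>
    \<comment> \<open>SSpecTil\<close>
    ({d. (ld, d) \<in> r\<^sup>* \<and> (\<exists>t. carries T C d t \<and> white_sides w t = 2)} = {ld, rd, lu, ru}) \<and>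
    (\<exists>t. carries T C ld t \<and> cl t = w \<and> cd t = w) \<and>
    (\<exists>t. carries T C rd t \<and> cr t = w \<and> cd t = w) \<and>
    (\<exists>t. carries T C lu t \<and> cl t = w \<and> cu t = w) \<and>
    (\<exists>t. carries T C ru t \<and> cr t = w \<and> cu t = w) \<and>
    \<comment> \<open>SHori\<close>
    (\<forall>d t. d \<noteq> ru \<and> (ld, d) \<in> r\<^sup>* \<and> carries T C d t \<longrightarrow>
       (\<exists>t'\<in>T. (\<forall>e. (d, e) \<in> r \<longrightarrow> carries T C e t') \<and>
          H_compat t t' \<and>
          (cd t = w \<longrightarrow> (cr t \<noteq> w \<longleftrightarrow> cd t' = w)) \<and>
          (cu t = w \<longrightarrow> cu t' = w))) \<and>
    \<comment> \<open>SLen and SVerti\<close>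
    (let P = (\<lambda>N::nat. 0 < N \<and>
                (\<forall>n. 0 < n \<and> (ld, rd) \<in> r ^^ n \<longrightarrow> n = N - 1) \<and>
                {d. (ld, d) \<in> r ^^ (N - 1)} = {rd})
     in \<exists>N. P N \<and> (\<forall>M. P M \<longrightarrow> M = N) \<and>
        (\<forall>d t. (ld, d) \<in> r\<^sup>* \<and> carries T C d t \<and> cu t \<noteq> w \<longrightarrow>
           (\<exists>t'\<in>T. (\<forall>e. (d, e) \<in> r ^^ N \<longrightarrow> carries T C e t') \<and>
              V_compat t t' \<and>
              (cl t = w \<longleftrightarrow> cl t' = w) \<and> (cr t = w \<longleftrightarrow> cr t' = w))))"

end

theory Submission
  imports Defs
begin

text \<open>Read the tiles carried along the r-path from ld through rd and lu to ru as a word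
  t_0 ... t_L. SLen puts rd at position N - 1, and SVerti relates t_k to t_(k+N) as long as t_k is
  not up-border. By SHori the down-border run starting at ld ends exactly at rd, so t_0 ... t_(N-1)
  is a bottom row; vertical steps then propagate left and right borders with period N, and the
  up-border tiles form the final segment starting at lu. Since no tile has more than two white
  sides, lu sits at a multiple of N and ru at lu + N - 1, so cutting the word into rows of length
  N tiles a rectangle.\<close>

lemma white_sides_eq:
  "white_sides w t = (if cl t = w then 1 else 0) + (if cd t = w then 1 else 0)
     + (if cr t = w then 1 else 0) + (if cu t = w then (1::nat) else 0)"
  by (simp add: white_sides_def)

lemma mult_add_less_mult_iff:
  fixes x y q N :: nat
  assumes "x < N"
  shows "y * N + x < q * N \<longleftrightarrow> y < q"
proof
  assume "y * N + x < q * N"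
  then show "y < q"
    by (metis le_add1 le_less_trans mult_less_cancel2)
next
  assume "y < q"
  then have "Suc y * N \<le> q * N"
    by (intro mult_le_mono1) simp
  then show "y * N + x < q * N"
    using assms by simp
qed

text \<open>The word t 0, ..., t L is read along the snake path; N is the row width, and j and L
  are the positions of lu and ru.\<close>
locale snake_word =
  fixes T :: "'c tile set" and w :: 'c and t :: "nat \<Rightarrow> 'c tile" and N j L :: nat
  assumes tile_in_T: "k \<le> L \<Longrightarrow> t k \<in> T"
    and white_sides_le_2: "k \<le> L \<Longrightarrow> white_sides w (t k) \<le> 2"
    and white_sides_eq_2_iff: "k \<le> L \<Longrightarrow> white_sides w (t k) = 2 \<longleftrightarrow> k \<in> {0, N - 1, j, L}"
    and two_le_N: "2 \<le> N" and N_le_j: "N \<le> j" and j_less_L: "j < L"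
    and corner_ld: "cl (t 0) = w" "cd (t 0) = w"
    and corner_rd: "cr (t (N - 1)) = w" "cd (t (N - 1)) = w"
    and corner_lu: "cl (t j) = w" "cu (t j) = w"
    and corner_ru: "cr (t L) = w" "cu (t L) = w"
    and H_step: "k < L \<Longrightarrow> H_compat (t k) (t (k + 1))"
    and down_border_step: "k < L \<Longrightarrow> cd (t k) = w \<Longrightarrow> cr (t k) \<noteq> w \<longleftrightarrow> cd (t (k + 1)) = w"
    and up_border_step: "k < L \<Longrightarrow> cu (t k) = w \<Longrightarrow> cu (t (k + 1)) = w"
    and V_step: "k + N \<le> L \<Longrightarrow> cu (t k) \<noteq> w \<Longrightarrow> V_compat (t k) (t (k + N))"
    and left_border_V_step: "k + N \<le> L \<Longrightarrow> cu (t k) \<noteq> w \<Longrightarrow> cl (t k) = w \<longleftrightarrow> cl (t (k + N)) = w"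
    and right_border_V_step: "k + N \<le> L \<Longrightarrow> cu (t k) \<noteq> w \<Longrightarrow> cr (t k) = w \<longleftrightarrow> cr (t (k + N)) = w"
begin

lemma first_row:
  assumes "k < N"
  shows "cd (t k) = w \<and> (cl (t k) = w \<longleftrightarrow> k = 0) \<and> (cr (t k) = w \<longleftrightarrow> k = N - 1) \<and> cu (t k) \<noteq> w"
  using assms
proof (induction k)
  case 0
  show ?case
    using white_sides_le_2[of 0] corner_ld two_le_N by (auto simp: white_sides_eq split: if_splits)
next
  case (Suc k)
  then have k: "k < L" "Suc k \<le> L" "cd (t k) = w" "cr (t k) \<noteq> w"
    using N_le_j j_less_L by auto
  have down: "cd (t (Suc k)) = w"
    using down_border_step k by simp
  have not_left: "cl (t (Suc k)) \<noteq> w"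
    using H_step[of k] k by (simp add: H_compat_def)
  show ?case
  proof (cases "Suc k = N - 1")
    case True
    then show ?thesis
      using white_sides_le_2[OF k(2)] corner_rd down not_left by (auto simp: white_sides_eq split: if_splits)
  next
    case False
    with Suc.prems N_le_j j_less_L have "white_sides w (t (Suc k)) \<noteq> 2"
      using white_sides_eq_2_iff[OF k(2)] by auto
    then show ?thesis
      using white_sides_le_2[OF k(2)] down not_left False by (auto simp: white_sides_eq split: if_splits)
  qed
qed

lemma up_border_persists:
  assumes "a \<le> k" "k \<le> L" "cu (t a) = w"
  shows "cu (t k) = w"
  using assms
proof (induction k rule: dec_induct)
  case (step n)
  then show ?case using up_border_step[of n] by simp
qed simp

lemma up_border_tile:
  assumes "k \<le> L" "cu (t k) = w"
  shows "cd (t k) \<noteq> w" "cl (t k) = w \<Longrightarrow> k = j" "cr (t k) = w \<Longrightarrow> k = L"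
proof -
  have "N \<le> k"
    using first_row[of k] assms(2) by (cases "k < N") auto
  then have "k \<notin> {0, N - 1}"
    using two_le_N by auto
  then have "white_sides w (t k) = 2 \<longleftrightarrow> k = j \<or> k = L"
    using white_sides_eq_2_iff[OF assms(1)] by auto
  then show "cd (t k) \<noteq> w" "cl (t k) = w \<Longrightarrow> k = j" "cr (t k) = w \<Longrightarrow> k = L"
    using white_sides_le_2[OF assms(1)] assms(2) corner_lu corner_ru j_less_L
    by (auto simp: white_sides_eq split: if_splits)
qed

lemma up_border_iff:
  assumes "k \<le> L"
  shows "cu (t k) = w \<longleftrightarrow> j \<le> k"
proof
  assume up: "cu (t k) = w"
  show "j \<le> k"
  proof (rule ccontr)
    assume "\<not> j \<le> k"
    then have "cu (t (j - 1)) = w"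
      using up_border_persists[OF _ _ up, of "j - 1"] j_less_L by simp
    then have "cr (t (j - 1)) \<noteq> w"
      using up_border_tile(3)[of "j - 1"] j_less_L by fastforce
    moreover have "H_compat (t (j - 1)) (t j)"
      using H_step[of "j - 1"] j_less_L N_le_j two_le_N by simp
    ultimately show False
      using corner_lu by (simp add: H_compat_def)
  qed
qed (use up_border_persists corner_lu assms in blast)

lemma side_borders_periodic:
  assumes "k \<le> L" "k < j + N"
  shows "(cl (t k) = w \<longleftrightarrow> k mod N = 0) \<and> (cr (t k) = w \<longleftrightarrow> k mod N = N - 1)"
  using assms
proof (induction k rule: less_induct)
  case (less k)
  show ?case
  proof (cases "k < N")
    case True
    then show ?thesis using first_row[of k] by simp
  next
    case False
    then have "k - N < k" "k - N + N = k" "(k - N) mod N = k mod N"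
      using two_le_N by (auto simp: mod_if)
    moreover have "cu (t (k - N)) \<noteq> w"
      using up_border_iff[of "k - N"] less.prems False by auto
    ultimately show ?thesis
      using less left_border_V_step[of "k - N"] right_border_V_step[of "k - N"] by auto
  qed
qed

lemma j_mod_N: "j mod N = 0"
  using side_borders_periodic[of j] corner_lu j_less_L two_le_N by auto

lemma L_eq: "L = j + (N - 1)"
proof -
  obtain q where q: "j = N * q"
    using j_mod_N by auto
  have mod_top_row: "(j + a) mod N = a" if "a < N" for a
    using q that by simp
  have right_border: "cr (t (j + a)) = w \<longleftrightarrow> a = N - 1" if "j + a \<le> L" "a < N" for a
    using side_borders_periodic[of "j + a"] mod_top_row[of a] that by auto
  have "\<not> j + (N - 1) < L"
  proof
    assume less: "j + (N - 1) < L"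
    then have "cr (t (j + (N - 1))) = w"
      using right_border[of "N - 1"] two_le_N by simp
    then show False
      using up_border_tile(3)[of "j + (N - 1)"] up_border_iff[of "j + (N - 1)"] less by simp
  qed
  moreover have "\<not> L < j + (N - 1)"
  proof
    assume "L < j + (N - 1)"
    moreover have "j + (L - j) = L"
      using j_less_L by simp
    ultimately show False
      using right_border[of "L - j"] corner_ru by simp linarith
  qed
  ultimately show ?thesis
    by simp
qed

lemma down_border_iff:
  assumes "k \<le> L"
  shows "cd (t k) = w \<longleftrightarrow> k < N"
proof (cases "k < N")
  case True
  then show ?thesis using first_row by simp
next
  case False
  then have "k - N + N = k" "cu (t (k - N)) \<noteq> w"
    using up_border_iff[of "k - N"] assms L_eq two_le_N by auto
  then show ?thesis
    using V_step[of "k - N"] assms False by (simp add: V_compat_def)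
qed

lemma covers_rows: "covers T w N (j div N + 1)"
proof -
  define q where "q = j div N"
  have j: "j = q * N"
    unfolding q_def using div_mult_mod_eq[of j N] j_mod_N by simp
  have "t (y * N + x) \<in> T \<and>
      (x = 0 \<longleftrightarrow> cl (t (y * N + x)) = w) \<and> (x = N - 1 \<longleftrightarrow> cr (t (y * N + x)) = w) \<and>
      (y = 0 \<longleftrightarrow> cd (t (y * N + x)) = w) \<and> (y = q \<longleftrightarrow> cu (t (y * N + x)) = w) \<and>
      (x + 1 < N \<longrightarrow> H_compat (t (y * N + x)) (t (y * N + (x + 1)))) \<and>
      (y < q \<longrightarrow> V_compat (t (y * N + x)) (t ((y + 1) * N + x)))"
    if x: "x < N" and y: "y < q + 1" for x y
  proof -
    define k where "k = y * N + x"
    have index_bounds: "y * N + x' < j \<longleftrightarrow> y < q" "y * N + x' < N \<longleftrightarrow> y = 0"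
        "y * N + x' < j + N" if "x' < N" for x'
      using mult_add_less_mult_iff[OF that, of y q] mult_add_less_mult_iff[OF that, of y 1]
        mult_add_less_mult_iff[OF that, of y "q + 1"] y unfolding j by (auto simp: algebra_simps)
    have k_le_L: "k \<le> L"
      using index_bounds(3)[OF x] L_eq unfolding k_def by simp
    have cells: "t k \<in> T" "x = 0 \<longleftrightarrow> cl (t k) = w" "x = N - 1 \<longleftrightarrow> cr (t k) = w"
        "y = 0 \<longleftrightarrow> cd (t k) = w" "y = q \<longleftrightarrow> cu (t k) = w"
      using tile_in_T[OF k_le_L] side_borders_periodic[OF k_le_L] down_border_iff[OF k_le_L]
        up_border_iff[OF k_le_L] index_bounds[OF x] x y unfolding k_def by auto
    have "H_compat (t k) (t (k + 1))" if "x + 1 < N"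
      using H_step[of k] index_bounds(3)[OF that] L_eq unfolding k_def by simp
    moreover have "V_compat (t k) (t (k + N))" if "y < q"
      using V_step[of k] cells(5) that index_bounds(1)[OF x] L_eq j unfolding k_def by simp
    moreover have neighbours: "y * N + (x + 1) = k + 1" "(y + 1) * N + x = k + N"
      unfolding k_def by simp_all
    ultimately show ?thesis
      using cells unfolding neighbours k_def[symmetric] by simp
  qed
  then show ?thesis
    unfolding covers_def q_def[symmetric] by (intro exI[of _ "\<lambda>(x, y). t (y * N + x)"]) simp
qed

lemma solvable: "solvable T w"
  using covers_rows two_le_N unfolding solvable_def by (intro exI[of _ N] exI[of _ "j div N + 1"]) simp

end

lemma list_path_relpow:
  assumes "\<And>k. k + 1 < length p \<Longrightarrow> (p ! k, p ! (k + 1)) \<in> r" "a \<le> b" "b < length p"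
  shows "(p ! a, p ! b) \<in> r ^^ (b - a)"
  using assms(2,3)
proof (induction b rule: dec_induct)
  case (step m)
  then have "(p ! m, p ! Suc m) \<in> r" "Suc m - a = Suc (m - a)"
    using assms(1)[of m] by auto
  then show ?case
    using step by auto
qed simp

locale snake_path =
  fixes T :: "'c tile set" and w :: 'c and r :: "('d \<times> 'd) set" and ld rd lu ru :: 'd
    and C :: "'c tile \<Rightarrow> 'd set" and p :: "'d list" and i j :: nat
  assumes snake: "snake T w r ld rd lu ru C"
    and path: "k + 1 < length p \<Longrightarrow> (p ! k, p ! (k + 1)) \<in> r"
    and positions: "0 < i" "i < j" "j < length p - 1"
    and at_ld: "p ! 0 = ld" and at_rd: "p ! i = rd" and at_lu: "p ! j = lu"
    and at_ru: "p ! (length p - 1) = ru"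
begin

abbreviation L :: nat where "L \<equiv> length p - 1"

definition tile :: "nat \<Rightarrow> 'c tile" where
  "tile k = (THE t. carries T C (p ! k) t)"

lemma path_relpow: "a \<le> b \<Longrightarrow> b \<le> L \<Longrightarrow> (p ! a, p ! b) \<in> r ^^ (b - a)"
  using list_path_relpow[OF path] positions by fastforce

lemma reachable: "k \<le> L \<Longrightarrow> (ld, p ! k) \<in> r\<^sup>*"
  using path_relpow[of 0 k] at_ld relpow_imp_rtrancl by fastforce

lemma named_position_unique:
  assumes "a \<le> L" "b \<le> L" "p ! a = p ! b" "p ! a \<in> {ld, rd, lu, ru}"
  shows "a = b"
proof (rule ccontr)
  assume "a \<noteq> b"
  then obtain x y where "x < y" "y \<le> L" "p ! x = p ! a" "p ! y = p ! a"
    using assms(1-3) by (metis linorder_neqE_nat)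
  then have "(p ! a, p ! a) \<in> r ^^ (y - x)"
    using path_relpow[of x y] by simp
  then have "(p ! a, p ! a) \<in> r\<^sup>+"
    using \<open>x < y\<close> trancl_power zero_less_diff by metis
  moreover have "\<forall>a\<in>{ld, rd, lu, ru}. (a, a) \<notin> r\<^sup>+"
    using snake unfolding snake_def by (elim conjE) assumption
  ultimately show False
    using assms(4) by blast
qed

lemma unique_tile:
  assumes "k \<le> L"
  shows "\<exists>!t. carries T C (p ! k) t"
proof -
  have "\<forall>d. (ld, d) \<in> r\<^sup>* \<longrightarrow> (\<exists>!t. carries T C d t)"
    using snake unfolding snake_def by (elim conjE) assumption
  then show ?thesis
    using reachable[OF assms] by blast
qed

lemma tile_carried: "k \<le> L \<Longrightarrow> carries T C (p ! k) (tile k)"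
  unfolding tile_def using unique_tile by (rule theI')

lemma carried_tile_eq: "k \<le> L \<Longrightarrow> carries T C (p ! k) t \<Longrightarrow> t = tile k"
  unfolding tile_def using unique_tile by (rule the1_equality[symmetric])

lemma tile_in_T: "k \<le> L \<Longrightarrow> tile k \<in> T"
  using tile_carried by (simp add: carries_def)

lemma tile_H_step:
  assumes "k < L"
  shows "H_compat (tile k) (tile (k + 1)) \<and>
    (cd (tile k) = w \<longrightarrow> (cr (tile k) \<noteq> w \<longleftrightarrow> cd (tile (k + 1)) = w)) \<and>
    (cu (tile k) = w \<longrightarrow> cu (tile (k + 1)) = w)"
proof -
  have "\<forall>d t. d \<noteq> ru \<and> (ld, d) \<in> r\<^sup>* \<and> carries T C d t \<longrightarrow>
       (\<exists>t'\<in>T. (\<forall>e. (d, e) \<in> r \<longrightarrow> carries T C e t') \<and>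
          H_compat t t' \<and>
          (cd t = w \<longrightarrow> (cr t \<noteq> w \<longleftrightarrow> cd t' = w)) \<and>
          (cu t = w \<longrightarrow> cu t' = w))"
    using snake unfolding snake_def by (elim conjE) assumption
  moreover have "p ! k \<noteq> ru"
    using named_position_unique[of k L] at_ru assms by auto
  ultimately obtain t' where succ: "\<forall>e. (p ! k, e) \<in> r \<longrightarrow> carries T C e t'"
    and "H_compat (tile k) t'" "cd (tile k) = w \<longrightarrow> (cr (tile k) \<noteq> w \<longleftrightarrow> cd t' = w)"
    "cu (tile k) = w \<longrightarrow> cu t' = w"
    using reachable[of k] tile_carried[of k] assms by fastforce
  moreover have "t' = tile (k + 1)"
    using succ path[of k] carried_tile_eq[of "k + 1"] assms by simp
  ultimately show ?thesis
    by simp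
qed

lemma tile_V_step:
  assumes "k + (i + 1) \<le> L" "cu (tile k) \<noteq> w"
  shows "V_compat (tile k) (tile (k + (i + 1))) \<and>
    (cl (tile k) = w \<longleftrightarrow> cl (tile (k + (i + 1))) = w) \<and>
    (cr (tile k) = w \<longleftrightarrow> cr (tile (k + (i + 1))) = w)"
proof -
  obtain N where "0 < N" "\<forall>n. 0 < n \<and> (ld, rd) \<in> r ^^ n \<longrightarrow> n = N - 1"
    and verti: "\<forall>d t. (ld, d) \<in> r\<^sup>* \<and> carries T C d t \<and> cu t \<noteq> w \<longrightarrow>
       (\<exists>t'\<in>T. (\<forall>e. (d, e) \<in> r ^^ N \<longrightarrow> carries T C e t') \<and> V_compat t t' \<and>
          (cl t = w \<longleftrightarrow> cl t' = w) \<and> (cr t = w \<longleftrightarrow> cr t' = w))"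
    using snake unfolding snake_def Let_def by (elim conjE exE) (rule that)
  moreover have "(ld, rd) \<in> r ^^ i"
    using path_relpow[of 0 i] positions at_ld at_rd by simp
  ultimately have N: "N = i + 1"
    using positions by fastforce
  obtain t' where succ: "\<forall>e. (p ! k, e) \<in> r ^^ N \<longrightarrow> carries T C e t'"
    and "V_compat (tile k) t'" "cl (tile k) = w \<longleftrightarrow> cl t' = w" "cr (tile k) = w \<longleftrightarrow> cr t' = w"
    using verti reachable[of k] tile_carried[of k] assms by fastforce
  moreover have "t' = tile (k + (i + 1))"
    using succ path_relpow[of k "k + (i + 1)"] carried_tile_eq[of "k + (i + 1)"] assms N by simp
  ultimately show ?thesis
    by simp
qed

lemma named_position_iff:
  assumes "k \<le> L"
  shows "p ! k \<in> {ld, rd, lu, ru} \<longleftrightarrow> k \<in> {0, i, j, L}"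
  using named_position_unique[OF assms, of 0] named_position_unique[OF assms, of i]
    named_position_unique[OF assms, of j] named_position_unique[OF assms, of L]
    at_ld at_rd at_lu at_ru positions by auto

lemma white_sides_tile_eq_2_iff:
  assumes "k \<le> L"
  shows "white_sides w (tile k) = 2 \<longleftrightarrow> k \<in> {0, i, j, L}"
proof -
  have "{d. (ld, d) \<in> r\<^sup>* \<and> (\<exists>t. carries T C d t \<and> white_sides w t = 2)} = {ld, rd, lu, ru}"
    using snake unfolding snake_def by (elim conjE) assumption
  then have "white_sides w (tile k) = 2 \<longleftrightarrow> p ! k \<in> {ld, rd, lu, ru}"
    using reachable[OF assms] tile_carried[OF assms] carried_tile_eq[OF assms] by blast
  then show ?thesis
    using named_position_iff[OF assms] by simp
qed

lemma corner_tiles: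
  "cl (tile 0) = w" "cd (tile 0) = w" "cr (tile i) = w" "cd (tile i) = w"
  "cl (tile j) = w" "cu (tile j) = w" "cr (tile L) = w" "cu (tile L) = w"
proof -
  have "(\<exists>t. carries T C ld t \<and> cl t = w \<and> cd t = w) \<and>
      (\<exists>t. carries T C rd t \<and> cr t = w \<and> cd t = w) \<and>
      (\<exists>t. carries T C lu t \<and> cl t = w \<and> cu t = w) \<and>
      (\<exists>t. carries T C ru t \<and> cr t = w \<and> cu t = w)"
    using snake unfolding snake_def by (elim conjE) (intro conjI; assumption)
  then show "cl (tile 0) = w" "cd (tile 0) = w" "cr (tile i) = w" "cd (tile i) = w"
    "cl (tile j) = w" "cu (tile j) = w" "cr (tile L) = w" "cu (tile L) = w"
    using carried_tile_eq[of 0] carried_tile_eq[of i] carried_tile_eq[of j] carried_tile_eq[of L]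
      at_ld at_rd at_lu at_ru positions by auto
qed

lemma snake_word:
  assumes "\<forall>t\<in>T. white_sides w t \<le> 2"
  shows "snake_word T w tile (i + 1) j L"
  by unfold_locales
    (use assms tile_in_T white_sides_tile_eq_2_iff corner_tiles positions tile_H_step tile_V_step in auto)

end

theorem lemma4p4:
  fixes Col :: "'c set" and T :: "'c tile set" and w :: 'c
    and r :: "('d \<times> 'd) set" and ld rd lu ru :: 'd and C :: "'c tile \<Rightarrow> 'd set"
  assumes "domino_system Col T w"
    and "snake T w r ld rd lu ru C"
  shows "solvable T w"
proof -
  obtain p i j where "0 < i" "i < j" "j < length p - 1"
    "\<forall>k. k + 1 < length p \<longrightarrow> (p ! k, p ! (k + 1)) \<in> r"
    "p ! 0 = ld" "p ! i = rd" "p ! j = lu" "p ! (length p - 1) = ru"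
    using assms(2) unfolding snake_def by (elim conjE exE) (rule that)
  then have "snake_path T w r ld rd lu ru C p i j"
    using assms(2) by unfold_locales auto
  moreover have "\<forall>t\<in>T. white_sides w t \<le> 2"
    using assms(1) by (simp add: domino_system_def)
  ultimately show ?thesis
    by (rule snake_word.solvable[OF snake_path.snake_word])
qed

end
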